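(* Let $N$ be a positive integer, $l\in\{2,\ldots,\frac{N}{2}\}$, and let $\Gamma$ be the $l$-hypercycle on $N$ vertices. Then the eigenvalues of its (signless) normalized Laplacian are $$\lambda_i=1+\frac{\sum_{r=1}^N m(r)\cos\left(\frac{2\pi i r}{N}\right)}{l},\qquad i=1,\ldots,N,$$ where $m:\{0,\ldots,N\}\to\mathbb{Z}$ is defined by $m(r):=l-r$ for $r\in\{1,\ldots,l-1\}$, $m(N-k):=l-k$ for $k\in\{1,\ldots,l-1\}$, and $m:=0$ otherwise.
   Context: A hypergraph $\Gamma=(\mathcal{V},\mathcal{H})$ has a finite vertex set $\mathcal{V}$ and a set $\mathcal{H}$ of nonempty subsets of $\mathcal{V}$ (hyperedges). $\deg(v)$ is the number of hyperedges containing $v$, $D$ the diagonal degree matrix, $A$ the matrix with $A_{ii}=0$ and $A_{ij}=-\#\{h\in\mathcal{H}: v_i,v_j\in h\}$ for $i\ne j$, and the (signless) normalized Laplacian is $L=\mathrm{Id}-D^{-1}A$. The $l$-hypercycle on $N$ vertices has $\mathcal{V}=\{v_1,\ldots,v_N\}$ and $\mathcal{H}=\{h_1,\ldots,h_N\}$ with $h_i=\{v_i,v_{i+1},\ldots,v_{i+l-1}\}$, indices taken modulo $N$ (i.e. $v_{N+i}:=v_i$). Here the eigenvalues $\lambda_i$ are indexed by the formula, not in increasing order. *)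

theory Defs
  imports Complex_Main "Jordan_Normal_Form.Char_Poly"
begin

(* A hypergraph on the vertex set {0..<n} (vertex v_k of the paper is k-1),
   given by its set of hyperedges H. *)

definition hdeg :: "nat set set \<Rightarrow> nat \<Rightarrow> nat" where
  "hdeg H v = card {h \<in> H. v \<in> h}"

definition hD :: "nat \<Rightarrow> nat set set \<Rightarrow> real mat" where
  "hD n H = mat n n (\<lambda>(i,j). if i = j then real (hdeg H i) else 0)"

definition hA :: "nat \<Rightarrow> nat set set \<Rightarrow> real mat" where
  "hA n H = mat n n (\<lambda>(i,j). if i = j then 0 else - real (card {h \<in> H. i \<in> h \<and> j \<in> h}))"

definition hDinv :: "nat \<Rightarrow> nat set set \<Rightarrow> real mat" where
  "hDinv n H = mat n n (\<lambda>(i,j). if i = j then 1 / real (hdeg H i) else 0)"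

definition hLap :: "nat \<Rightarrow> nat set set \<Rightarrow> real mat" where
  "hLap n H = 1\<^sub>m n - hDinv n H * hA n H"

definition hypercycle :: "nat \<Rightarrow> nat \<Rightarrow> nat set set" where
  "hypercycle N l = {{(i + j) mod N | j. j < l} | i. i < N}"

definition mfun :: "nat \<Rightarrow> nat \<Rightarrow> nat \<Rightarrow> int" where
  "mfun N l r = (if 1 \<le> r \<and> r \<le> l - 1 then int l - int r
     else if (\<exists>k. 1 \<le> k \<and> k \<le> l - 1 \<and> r = N - k) then int l - int (N - r)
     else 0)"

definition hc_eig :: "nat \<Rightarrow> nat \<Rightarrow> nat \<Rightarrow> real" where
  "hc_eig N l i = 1 + (\<Sum>r = 1..N. real_of_int (mfun N l r) * cos (2 * pi * real i * real r / real N)) / real l"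

end

theory Submission
  imports Defs
begin

(* The hypercycle is invariant under the rotation v \<mapsto> v + 1, so its Laplacian is a circulant
   matrix: its entry at cyclic offset r \<noteq> 0 is the number of hyperedges containing both v and
   v + r, divided by the degree l, and that number is m(r). A circulant matrix with first row c is
   diagonalised by the Fourier matrix (\<omega>^(j k)), \<omega> = e^(2 \<pi> i / N), with eigenvalues
   \<Sum>r c(r) \<omega>^(r k); since m(N - r) = m(r), these are the real cosine sums of the theorem. *)

lemma mod_less_double:
  fixes x N :: nat
  assumes "x < 2 * N"
  shows "x mod N = (if x < N then x else x - N)"
  using assms by (simp add: le_mod_geq)

lemma mod_N_add_diff:
  fixes i x N :: nat
  assumes "i < N" "x < N"
  shows "(N + x - i) mod N = (if i \<le> x then x - i else N + x - i)"
  using assms by (simp add: mod_less_double)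

lemma mod_N_diff_involution:
  fixes a j N :: nat
  assumes "a < N" "j < N"
  shows "(N + j - (N + j - a) mod N) mod N = a"
  using assms by (simp add: mod_N_add_diff)

lemma mod_N_add_diff_trans:
  fixes i j t N :: nat
  assumes "i < N" "j < N" "t < N"
  shows "((N + j - i) mod N + (N + t - j) mod N) mod N = (N + t - i) mod N"
proof -
  have "((N + j - i) mod N + (N + t - j) mod N) mod N = (N + (N + t - i)) mod N"
    using assms by (simp add: mod_add_eq)
  then show ?thesis by simp
qed

lemma dvd_N_add_diff_iff_eq:
  fixes i j N :: nat
  assumes "i < N" "j < N"
  shows "N dvd i + N - j \<longleftrightarrow> i = j"
proof -
  have "(i + N - j) mod N = (if j \<le> i then i - j else i + N - j)"
    using assms by (simp add: mod_less_double)
  then show ?thesis using assms by (auto simp: dvd_eq_mod_eq_0)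
qed

lemma sum_lessThan_cyclic_shift:
  fixes j N :: nat
  assumes "j < N"
  shows "(\<Sum>t<N. g ((N + t - j) mod N) t) = (\<Sum>r<N. g r ((r + j) mod N))"
proof (rule sum.reindex_bij_witness[where i = "\<lambda>r. (r + j) mod N" and j = "\<lambda>t. (N + t - j) mod N"])
  fix t assume "t \<in> {..<N}"
  then show "(N + t - j) mod N \<in> {..<N}" "((N + t - j) mod N + j) mod N = t"
    using assms by (simp, simp add: mod_N_add_diff)
  then show "g ((N + t - j) mod N) (((N + t - j) mod N + j) mod N) = g ((N + t - j) mod N) t"
    by simp
next
  fix r assume "r \<in> {..<N}"
  then show "(r + j) mod N \<in> {..<N}" "(N + (r + j) mod N - j) mod N = r"
    using assms by (simp, simp add: mod_less_double)
qed

lemma (in comm_monoid_set) lessThan_eq_atLeast1_atMost: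
  fixes N :: nat
  assumes "g 0 = g N"
  shows "F g {..<N} = F g {1..N}"
proof (cases N)
  case (Suc n)
  have "{..<N} = insert 0 {1..<N}" "{1..N} = insert N {1..<N}" using Suc by auto
  then show ?thesis using assms by simp
qed simp

(* (N + t - j) mod N is the cyclic offset t - j; adding N avoids truncated subtraction. *)
definition circulant :: "nat \<Rightarrow> (nat \<Rightarrow> 'a) \<Rightarrow> 'a mat" where
  "circulant N c = mat N N (\<lambda>(j, t). c ((N + t - j) mod N))"

definition unity_root :: "nat \<Rightarrow> nat \<Rightarrow> complex" where
  "unity_root N a = cis (2 * pi * real a / real N)"

lemma unity_root_add: "unity_root N (a + b) = unity_root N a * unity_root N b"
  by (simp add: unity_root_def cis_mult add_divide_distrib distrib_left)

lemma unity_root_mult_N: "unity_root N (N * q) = 1"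
proof (cases "N = 0")
  case False
  then have "2 * pi * real (N * q) / real N = 2 * pi * real q" by simp
  then show ?thesis by (simp add: unity_root_def)
qed (simp add: unity_root_def)

lemma unity_root_eq_1_iff:
  assumes "0 < N"
  shows "unity_root N a = 1 \<longleftrightarrow> N dvd a"
proof
  assume "unity_root N a = 1"
  then have "cos (2 * pi * real a / real N) = 1"
    unfolding unity_root_def by (metis cis.sel(1) one_complex.sel(1))
  then obtain n :: int where "2 * pi * real a / real N = n * 2 * pi"
    by (auto simp: cos_one_2pi_int)
  then have "real_of_int (int a) = real_of_int (n * int N)" using assms by (simp add: field_simps)
  then have "int N dvd int a" unfolding of_int_eq_iff by simp
  then show "N dvd a" by simp
next
  assume "N dvd a"
  then obtain q where "a = N * q" ..
  then show "unity_root N a = 1" by (simp add: unity_root_mult_N)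
qed

lemma unity_root_mod: "unity_root N (a mod N) = unity_root N a"
proof -
  have "unity_root N a = unity_root N (N * (a div N) + a mod N)" by simp
  also have "\<dots> = unity_root N (a mod N)" by (simp only: unity_root_add unity_root_mult_N mult_1)
  finally show ?thesis ..
qed

lemma unity_root_pow: "unity_root N a ^ k = unity_root N (a * k)"
  by (simp add: unity_root_def DeMoivre algebra_simps)

lemma sum_unity_root_pow:
  assumes "0 < N"
  shows "(\<Sum>k<N. unity_root N a ^ k) = (if N dvd a then of_nat N else 0)"
proof (cases "N dvd a")
  case True
  then have "unity_root N a = 1" using assms unity_root_eq_1_iff by blast
  then show ?thesis using True by simp
next
  case False
  then have "unity_root N a \<noteq> 1" using assms unity_root_eq_1_iff by blast
  moreover have "unity_root N a ^ N = 1" by (simp add: unity_root_pow mult.commute unity_root_mult_N)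
  ultimately show ?thesis using False by (simp add: sum_gp_strict)
qed

lemma char_poly_eq_prod_if_diagonalized:
  fixes A F G :: "'a :: field mat"
  assumes A: "A \<in> carrier_mat n n" and F: "F \<in> carrier_mat n n" and G: "G \<in> carrier_mat n n"
    and FG: "F * G = 1\<^sub>m n" and AF: "A * F = F * mat_diag n d"
  shows "char_poly A = (\<Prod>k<n. [:- d k, 1:])"
proof -
  have GF: "G * F = 1\<^sub>m n" by (rule mat_mult_left_right_inverse[OF F G FG])
  have "A = A * (F * G)" using A FG by simp
  also have "\<dots> = A * F * G" using A F G by (simp add: assoc_mult_mat)
  also have "\<dots> = F * mat_diag n d * G" by (simp only: AF)
  finally have "similar_mat A (mat_diag n d)"
    unfolding similar_mat_def similar_mat_wit_def using A F G FG GF by (auto simp: Let_def)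
  then have "char_poly A = char_poly (mat_diag n d)" by (rule char_poly_similar)
  also have "\<dots> = (\<Prod>a \<leftarrow> diag_mat (mat_diag n d). [:- a, 1:])"
    by (rule char_poly_upper_triangular) (auto simp: upper_triangular_def mat_diag_def)
  also have "\<dots> = (\<Prod>k<n. [:- d k, 1:])"
    by (simp add: diag_mat_def mat_diag_def prod.distinct_set_conv_list[symmetric] atLeast0LessThan)
  finally show ?thesis .
qed

theorem char_poly_circulant:
  fixes c :: "nat \<Rightarrow> complex"
  shows "char_poly (circulant N c) = (\<Prod>k<N. [:- (\<Sum>r<N. c r * unity_root N (r * k)), 1:])"
proof (cases "N = 0")
  case True
  then show ?thesis by (simp add: circulant_def char_poly_def char_poly_matrix_def)
next
  case False
  define F where "F = mat N N (\<lambda>(j, k). unity_root N (j * k))"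
  \<comment> \<open>the inverse Fourier matrix: unity_root N (k * (N - j)) is the conjugate of unity_root N (k * j)\<close>
  define G where "G = mat N N (\<lambda>(k, j). unity_root N (k * (N - j)) / of_nat N)"
  have F: "F \<in> carrier_mat N N" by (simp add: F_def)
  define eig where "eig k = (\<Sum>r<N. c r * unity_root N (r * k))" for k
  have "F * G = 1\<^sub>m N"
  proof (rule eq_matI)
    fix i j assume "i < dim_row (1\<^sub>m N :: complex mat)" "j < dim_col (1\<^sub>m N :: complex mat)"
    then have ij: "i < N" "j < N" by auto
    have "(F * G) $$ (i, j) = (\<Sum>k<N. unity_root N (i + N - j) ^ k) / of_nat N"
      using ij by (simp add: F_def G_def scalar_prod_def lessThan_atLeast0 sum_divide_distrib
          unity_root_pow unity_root_add[symmetric] algebra_simps)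
    also have "\<dots> = 1\<^sub>m N $$ (i, j)"
      using ij False by (simp add: sum_unity_root_pow dvd_N_add_diff_iff_eq)
    finally show "(F * G) $$ (i, j) = 1\<^sub>m N $$ (i, j)" .
  qed (simp_all add: F_def G_def)
  moreover have "circulant N c * F = F * mat_diag N eig"
  proof (rule eq_matI)
    fix j k assume "j < dim_row (F * mat_diag N eig)" "k < dim_col (F * mat_diag N eig)"
    then have jk: "j < N" "k < N" by (auto simp: F_def mat_diag_def)
    have "(circulant N c * F) $$ (j, k) = (\<Sum>t<N. c ((N + t - j) mod N) * unity_root N (t * k))"
      using jk by (simp add: circulant_def F_def scalar_prod_def lessThan_atLeast0)
    also have "\<dots> = (\<Sum>r<N. c r * unity_root N ((r + j) mod N * k))"
      by (rule sum_lessThan_cyclic_shift[OF \<open>j < N\<close>])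
    also have "\<dots> = (\<Sum>r<N. c r * (unity_root N (r * k) * unity_root N (j * k)))"
      by (simp only: unity_root_pow[symmetric] unity_root_mod unity_root_add power_mult_distrib)
    also have "\<dots> = (F * mat_diag N eig) $$ (j, k)"
      using jk by (simp add: mat_diag_mult_right[OF F] eig_def sum_distrib_left, simp add: F_def mult_ac)
    finally show "(circulant N c * F) $$ (j, k) = (F * mat_diag N eig) $$ (j, k)" .
  qed (simp_all add: circulant_def F_def mat_diag_def)
  ultimately show ?thesis unfolding eig_def
    by (intro char_poly_eq_prod_if_diagonalized[of _ N F G]) (simp_all add: circulant_def F_def G_def)
qed

lemma sum_sin_symmetric:
  fixes c :: "nat \<Rightarrow> real"
  assumes sym: "\<And>r. 0 < r \<Longrightarrow> r < N \<Longrightarrow> c (N - r) = c r"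
  shows "(\<Sum>r<N. c r * sin (2 * pi * real k * real r / real N)) = 0"
proof -
  define f where "f r = c r * sin (2 * pi * real k * real r / real N)" for r
  have neg: "(N - r) mod N = (if r = 0 then 0 else N - r)" if "r < N" for r
    using that by (simp add: mod_if)
  have "(\<Sum>r<N. f r) = (\<Sum>r<N. f ((N - r) mod N))"
    by (rule sum.reindex_bij_witness[where i = "\<lambda>r. (N - r) mod N" and j = "\<lambda>r. (N - r) mod N"])
       (auto simp: neg)
  also have "\<dots> = (\<Sum>r<N. - f r)"
  proof (rule sum.cong)
    fix r assume "r \<in> {..<N}"
    then consider "r = 0" | "0 < r" "r < N" by auto
    then show "f ((N - r) mod N) = - f r"
    proof cases
      case 2
      then have "2 * pi * real k * real (N - r) / real N = 2 * real k * pi - 2 * pi * real k * real r / real N"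
        by (simp add: of_nat_diff field_simps)
      then have "sin (2 * pi * real k * real (N - r) / real N) = - sin (2 * pi * real k * real r / real N)"
        by (simp add: sin_diff)
      with 2 show ?thesis by (simp add: f_def sym)
    qed (simp add: f_def)
  qed simp
  finally show ?thesis unfolding f_def by (simp add: sum_negf)
qed

lemma sum_unity_root_symmetric:
  fixes c :: "nat \<Rightarrow> real"
  assumes "\<And>r. 0 < r \<Longrightarrow> r < N \<Longrightarrow> c (N - r) = c r"
  shows "(\<Sum>r<N. of_real (c r) * unity_root N (r * k))
    = of_real (\<Sum>r<N. c r * cos (2 * pi * real k * real r / real N))"
proof (rule complex_eqI)
  have "Im (\<Sum>r<N. of_real (c r) * unity_root N (r * k)) = (\<Sum>r<N. c r * sin (2 * pi * real k * real r / real N))"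
    by (simp add: Im_sum unity_root_def mult_ac)
  then show "Im (\<Sum>r<N. of_real (c r) * unity_root N (r * k))
    = Im (of_real (\<Sum>r<N. c r * cos (2 * pi * real k * real r / real N)))"
    using sum_sin_symmetric[where N = N and c = c, OF assms] by simp
qed (simp add: Re_sum unity_root_def mult_ac)

theorem char_poly_circulant_symmetric:
  fixes c :: "nat \<Rightarrow> real"
  assumes "\<And>r. 0 < r \<Longrightarrow> r < N \<Longrightarrow> c (N - r) = c r"
  shows "char_poly (circulant N c) = (\<Prod>k<N. [:- (\<Sum>r<N. c r * cos (2 * pi * real k * real r / real N)), 1:])"
proof -
  interpret of_real_poly: map_poly_inj_comm_ring_hom "of_real :: real \<Rightarrow> complex" ..
  have complexify: "map_mat of_real (circulant N c) = circulant N (\<lambda>r. of_real (c r))"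
    by (auto simp: circulant_def)
  have "map_poly of_real (char_poly (circulant N c)) = char_poly (circulant N (\<lambda>r. of_real (c r)))"
    unfolding complexify[symmetric]
    by (rule of_real_hom.char_poly_hom[of _ N, symmetric]) (simp add: circulant_def)
  also have "\<dots> = (\<Prod>k<N. [:- (\<Sum>r<N. of_real (c r) * unity_root N (r * k)), 1:])"
    by (rule char_poly_circulant)
  also have "\<dots> = (\<Prod>k<N. [:- of_real (\<Sum>r<N. c r * cos (2 * pi * real k * real r / real N)), 1:])"
    by (simp only: sum_unity_root_symmetric[where N = N and c = c, OF assms])
  also have "\<dots> = map_poly of_real (\<Prod>k<N. [:- (\<Sum>r<N. c r * cos (2 * pi * real k * real r / real N)), 1:])"
    by (simp add: of_real_poly.hom_prod)
  finally show ?thesis by (simp only: of_real_poly.eq_iff)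
qed

lemma hLap_index:
  assumes "i < n" "j < n"
  shows "hLap n H $$ (i, j)
    = (if i = j then 1 else real (card {h \<in> H. i \<in> h \<and> j \<in> h}) / real (hdeg H i))"
proof -
  have "hDinv n H = mat_diag n (\<lambda>i. 1 / real (hdeg H i))"
    by (auto simp: hDinv_def mat_diag_def)
  then have "(hDinv n H * hA n H) $$ (i, j) = hA n H $$ (i, j) / real (hdeg H i)"
    using assms by (simp add: mat_diag_mult_left[of _ n n] hA_def)
  moreover have "hDinv n H * hA n H \<in> carrier_mat n n"
    by (rule mult_carrier_mat[of _ n n]) (simp_all add: hDinv_def hA_def)
  then have "hLap n H $$ (i, j) = 1\<^sub>m n $$ (i, j) - (hDinv n H * hA n H) $$ (i, j)"
    unfolding hLap_def using assms by (intro index_minus_mat(1)) auto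
  ultimately show ?thesis using assms by (simp add: hA_def)
qed

definition arc :: "nat \<Rightarrow> nat \<Rightarrow> nat \<Rightarrow> nat set" where
  "arc N l i = {(i + u) mod N | u. u < l}"

lemma hypercycle_eq_image_arc: "hypercycle N l = arc N l ` {..<N}"
  by (auto simp: hypercycle_def arc_def)

lemma mem_arc_iff:
  assumes "i < N" "x < N" "l \<le> N"
  shows "x \<in> arc N l i \<longleftrightarrow> (N + x - i) mod N < l"
proof
  assume "x \<in> arc N l i"
  then obtain u where "u < l" "x = (i + u) mod N" by (auto simp: arc_def)
  then show "(N + x - i) mod N < l"
    using assms by (simp add: mod_less_double)
next
  assume "(N + x - i) mod N < l"
  moreover have "x = (i + (N + x - i) mod N) mod N"
    using assms by (simp add: mod_N_add_diff)
  ultimately show "x \<in> arc N l i" by (auto simp: arc_def)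
qed

lemma inj_on_arc:
  assumes "0 < l" "2 * l \<le> N"
  shows "inj_on (arc N l) {..<N}"
proof (rule inj_onI, rule ccontr)
  fix i i' assume i: "i \<in> {..<N}" and i': "i' \<in> {..<N}" and eq: "arc N l i = arc N l i'" and "i \<noteq> i'"
  have "i \<in> arc N l i" "i' \<in> arc N l i'"
    using i i' assms by (simp_all add: mem_arc_iff)
  then have "i \<in> arc N l i'" "i' \<in> arc N l i"
    using eq by simp_all
  then have "(N + i - i') mod N < l" "(N + i' - i) mod N < l"
    using i i' assms by (simp_all add: mem_arc_iff)
  moreover have "(N + i - i') mod N + (N + i' - i) mod N = N"
    using i i' \<open>i \<noteq> i'\<close> by (simp add: mod_N_add_diff)
  ultimately show False using assms by linarith
qed

lemma card_arcs_containing: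
  assumes "0 < l" "2 * l \<le> N" "j < N" "t < N"
  shows "card {h \<in> hypercycle N l. j \<in> h \<and> t \<in> h}
    = card {u. u < l \<and> (u + (N + t - j) mod N) mod N < l}"
proof -
  let ?S = "{i \<in> {..<N}. (N + j - i) mod N < l \<and> (N + t - i) mod N < l}"
  have "{h \<in> hypercycle N l. j \<in> h \<and> t \<in> h} = arc N l ` ?S"
    using assms by (auto simp: hypercycle_eq_image_arc mem_arc_iff)
  moreover have "inj_on (arc N l) ?S"
    using inj_on_arc[OF assms(1,2)] by (rule inj_on_subset) auto
  ultimately have "card {h \<in> hypercycle N l. j \<in> h \<and> t \<in> h} = card ?S"
    by (simp add: card_image)
  also have "\<dots> = card {u. u < l \<and> (u + (N + t - j) mod N) mod N < l}"
  proof (rule bij_betw_same_card, rule bij_betw_byWitness[where f' = "\<lambda>u. (N + j - u) mod N"])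
    show "\<forall>i\<in>?S. (N + j - (N + j - i) mod N) mod N = i"
      using assms by (simp add: mod_N_diff_involution)
    show "\<forall>u\<in>{u. u < l \<and> (u + (N + t - j) mod N) mod N < l}. (N + j - (N + j - u) mod N) mod N = u"
      using assms by (simp add: mod_N_diff_involution)
    show "(\<lambda>i. (N + j - i) mod N) ` ?S \<subseteq> {u. u < l \<and> (u + (N + t - j) mod N) mod N < l}"
      using assms by (auto simp: mod_N_add_diff_trans)
    show "(\<lambda>u. (N + j - u) mod N) ` {u. u < l \<and> (u + (N + t - j) mod N) mod N < l} \<subseteq> ?S"
    proof (rule image_subsetI)
      fix u assume "u \<in> {u. u < l \<and> (u + (N + t - j) mod N) mod N < l}"
      then have u: "u < l" "(u + (N + t - j) mod N) mod N < l" by simp_all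
      have i: "(N + j - u) mod N < N" using assms by simp
      have "(N + j - (N + j - u) mod N) mod N = u"
        using u assms by (simp add: mod_N_diff_involution)
      moreover have "(N + t - (N + j - u) mod N) mod N
          = ((N + j - (N + j - u) mod N) mod N + (N + t - j) mod N) mod N"
        using i assms by (simp add: mod_N_add_diff_trans)
      ultimately show "(N + j - u) mod N \<in> ?S" using i u by simp
    qed
  qed
  finally show ?thesis .
qed

lemma mfun_cases:
  assumes "2 * l \<le> N" "0 < r" "r < N"
  obtains "r < l" "mfun N l r = int l - int r"
    | "l \<le> r" "r \<le> N - l" "mfun N l r = 0"
    | "N - l < r" "mfun N l r = int l - int (N - r)"
proof -
  consider "r < l" | "l \<le> r \<and> r \<le> N - l" | "N - l < r" by linarith
  then show ?thesis
  proof cases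
    case 3
    then have "\<exists>k. 1 \<le> k \<and> k \<le> l - 1 \<and> r = N - k"
      using assms by (intro exI[of _ "N - r"]) linarith
    moreover have "\<not> (1 \<le> r \<and> r \<le> l - 1)" using 3 assms by linarith
    ultimately show ?thesis using 3 that(3) by (simp add: mfun_def)
  next
    case 2
    have "\<not> (1 \<le> r \<and> r \<le> l - 1)" "\<not> (\<exists>k. 1 \<le> k \<and> k \<le> l - 1 \<and> r = N - k)"
      using 2 assms by auto
    then have "mfun N l r = 0" unfolding mfun_def by (simp only: if_False)
    then show ?thesis using 2 that(2) by simp
  qed (use assms that in \<open>auto simp: mfun_def\<close>)
qed

lemma card_overlap_shift:
  assumes "2 * l \<le> N" "0 < r" "r < N"
  shows "int (card {u. u < l \<and> (u + r) mod N < l}) = mfun N l r"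
  using assms(1-3)
proof (cases rule: mfun_cases)
  case 1
  then have "{u. u < l \<and> (u + r) mod N < l} = {..<l - r}" using assms by (auto simp: mod_less_double)
  then show ?thesis using 1 by simp
next
  case 2
  then have "{u. u < l \<and> (u + r) mod N < l} = {}" using assms by (auto simp: mod_less_double)
  then show ?thesis using 2 by simp
next
  case 3
  then have "{u. u < l \<and> (u + r) mod N < l} = {N - r..<l}"
    using assms by (auto simp: mod_less_double split: if_splits)
  then show ?thesis using 3 by simp
qed

lemma hdeg_hypercycle:
  assumes "0 < l" "2 * l \<le> N" "k < N"
  shows "hdeg (hypercycle N l) k = l"
proof -
  have "hdeg (hypercycle N l) k = card {h \<in> hypercycle N l. k \<in> h \<and> k \<in> h}"
    by (simp add: hdeg_def)
  also have "\<dots> = card {u. u < l \<and> u mod N < l}"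
    using card_arcs_containing[OF assms(1,2,3,3)] by simp
  also have "{u. u < l \<and> u mod N < l} = {..<l}" using assms by auto
  finally show ?thesis by simp
qed

lemma hLap_hypercycle:
  assumes "0 < l" "2 * l \<le> N"
  shows "hLap N (hypercycle N l)
    = circulant N (\<lambda>r. if r = 0 then 1 else real_of_int (mfun N l r) / real l)"
proof (rule eq_matI)
  fix j t assume "j < dim_row (circulant N (\<lambda>r. if r = 0 then 1 else real_of_int (mfun N l r) / real l))"
    and "t < dim_col (circulant N (\<lambda>r. if r = 0 then 1 else real_of_int (mfun N l r) / real l))"
  then have jt: "j < N" "t < N" by (simp_all add: circulant_def)
  show "hLap N (hypercycle N l) $$ (j, t)
    = circulant N (\<lambda>r. if r = 0 then 1 else real_of_int (mfun N l r) / real l) $$ (j, t)"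
  proof (cases "j = t")
    case False
    let ?r = "(N + t - j) mod N"
    have r: "0 < ?r" "?r < N" using jt False by (auto simp: mod_N_add_diff)
    have "int (card {h \<in> hypercycle N l. j \<in> h \<and> t \<in> h}) = mfun N l ?r"
      using assms jt by (simp add: card_arcs_containing card_overlap_shift[OF _ r])
    then have "real (card {h \<in> hypercycle N l. j \<in> h \<and> t \<in> h}) = real_of_int (mfun N l ?r)"
      by (metis of_int_of_nat_eq)
    then show ?thesis using assms jt r False by (simp add: hLap_index hdeg_hypercycle circulant_def)
  qed (use jt in \<open>simp add: hLap_index circulant_def\<close>)
qed (simp_all add: circulant_def hLap_def hDinv_def hA_def)

lemma mfun_symmetric:
  assumes "2 * l \<le> N" "0 < r" "r < N"
  shows "mfun N l (N - r) = mfun N l r"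
proof -
  have r': "0 < N - r" "N - r < N" using assms by auto
  show ?thesis
    by (rule mfun_cases[OF assms]; rule mfun_cases[OF assms(1) r']) (use assms in auto)
qed

lemma hc_eig_eq_sum:
  assumes "2 * l \<le> N" "0 < N"
  shows "(\<Sum>r<N. (if r = 0 then 1 else real_of_int (mfun N l r) / real l)
      * cos (2 * pi * real k * real r / real N)) = hc_eig N l k"
proof -
  have mfun_0: "mfun N l 0 = 0" and mfun_N: "mfun N l N = 0"
    using assms by (auto simp: mfun_def)
  let ?f = "\<lambda>r. real_of_int (mfun N l r) * cos (2 * pi * real k * real r / real N)"
  have "(if r = 0 then 1 else real_of_int (mfun N l r) / real l) * cos (2 * pi * real k * real r / real N)
      = (if r = 0 then 1 else 0) + ?f r / real l" for r
    by (simp add: mfun_0)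
  then have "(\<Sum>r<N. (if r = 0 then 1 else real_of_int (mfun N l r) / real l)
      * cos (2 * pi * real k * real r / real N)) = 1 + (\<Sum>r<N. ?f r) / real l"
    using assms by (simp add: sum.distrib sum_divide_distrib)
  also have "(\<Sum>r<N. ?f r) = (\<Sum>r = 1..N. ?f r)"
    by (rule sum.lessThan_eq_atLeast1_atMost) (simp add: mfun_0 mfun_N)
  finally show ?thesis by (simp add: hc_eig_def)
qed

lemma hc_eig_N_eq_0:
  assumes "0 < N"
  shows "hc_eig N l N = hc_eig N l 0"
proof -
  have "cos (2 * (pi * real r)) = 1" for r
    using cos_int_2pin[of "int r"] by (simp add: mult.assoc)
  then show ?thesis using assms by (simp add: hc_eig_def)
qed

theorem mainTheorem10:
  fixes N l :: nat
  assumes "0 < N" and "2 \<le> l" and "2 * l \<le> N"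
  shows "char_poly (hLap N (hypercycle N l)) = (\<Prod>i = 1..N. [:- hc_eig N l i, 1:])"
proof -
  let ?c = "\<lambda>r. if r = 0 then 1 else real_of_int (mfun N l r) / real l"
  have "?c (N - r) = ?c r" if "0 < r" "r < N" for r
    using that assms by (simp add: mfun_symmetric)
  then have "char_poly (hLap N (hypercycle N l))
      = (\<Prod>k<N. [:- (\<Sum>r<N. ?c r * cos (2 * pi * real k * real r / real N)), 1:])"
    using assms by (simp only: hLap_hypercycle char_poly_circulant_symmetric)
  also have "\<dots> = (\<Prod>k<N. [:- hc_eig N l k, 1:])"
    using assms by (simp only: hc_eig_eq_sum)
  also have "\<dots> = (\<Prod>i = 1..N. [:- hc_eig N l i, 1:])"
    by (rule prod.lessThan_eq_atLeast1_atMost) (simp add: hc_eig_N_eq_0 assms)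
  finally show ?thesis .
qed

end
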